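(* For a read-once Boolean function $f$ the following are equivalent: (1) $f$ is linear read-once; (2) $f$ is a Chow function; (3) no restriction of $f$ equals, up to renaming of variables, $g_1(x,y,z,u)=(x\vee y)\wedge(z\vee u)$, $g_2(x,y,z,u)=(x\wedge y)\vee(z\wedge u)$, or any function obtained from $g_1$ or $g_2$ by negating some of its variables.
   Context: Read-once: representable by a formula over $\wedge,\vee,\neg$ in which every variable appears at most once. Linear read-once (lro): constant, or representable by a nested formula, where literals $x,\overline{x}$ are nested and $x\vee t$, $x\wedge t$, $\overline{x}\vee t$, $\overline{x}\wedge t$ are nested whenever $t$ is nested and contains neither $x$ nor $\overline{x}$. Chow parameters of $f(x_1,\ldots,x_n)$: $(w_1(f),\ldots,w_n(f),w(f))$, with $w(f)$ the number of true points and $w_i(f)$ the number of true points with $x_i=1$; $f$ is Chow if no other function of the same variables has the same Chow parameters. A restriction of $f$ is obtained by fixing some variables to constants. *)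

theory Defs
  imports Main
begin

datatype 'n formula =
    FConst bool
  | FVar 'n
  | FNeg "'n formula"
  | FAnd "'n formula" "'n formula"
  | FOr "'n formula" "'n formula"

primrec eval :: "'n formula \<Rightarrow> ('n \<Rightarrow> bool) \<Rightarrow> bool" where
  "eval (FConst b) p = b"
| "eval (FVar x) p = p x"
| "eval (FNeg t) p = (\<not> eval t p)"
| "eval (FAnd s t) p = (eval s p \<and> eval t p)"
| "eval (FOr s t) p = (eval s p \<or> eval t p)"

primrec var_occs :: "'n formula \<Rightarrow> 'n list" where
  "var_occs (FConst b) = []"
| "var_occs (FVar x) = [x]"
| "var_occs (FNeg t) = var_occs t"
| "var_occs (FAnd s t) = var_occs s @ var_occs t"
| "var_occs (FOr s t) = var_occs s @ var_occs t"

definition read_once :: "(('n \<Rightarrow> bool) \<Rightarrow> bool) \<Rightarrow> bool" where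
  "read_once f \<longleftrightarrow> (\<exists>\<phi>. distinct (var_occs \<phi>) \<and> (\<forall>p. eval \<phi> p = f p))"

inductive nested :: "'n formula \<Rightarrow> bool" where
  lit_pos: "nested (FVar x)"
| lit_neg: "nested (FNeg (FVar x))"
| or_pos: "nested t \<Longrightarrow> x \<notin> set (var_occs t) \<Longrightarrow> nested (FOr (FVar x) t)"
| and_pos: "nested t \<Longrightarrow> x \<notin> set (var_occs t) \<Longrightarrow> nested (FAnd (FVar x) t)"
| or_neg: "nested t \<Longrightarrow> x \<notin> set (var_occs t) \<Longrightarrow> nested (FOr (FNeg (FVar x)) t)"
| and_neg: "nested t \<Longrightarrow> x \<notin> set (var_occs t) \<Longrightarrow> nested (FAnd (FNeg (FVar x)) t)"

definition linear_read_once :: "(('n \<Rightarrow> bool) \<Rightarrow> bool) \<Rightarrow> bool" where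
  "linear_read_once f \<longleftrightarrow>
     (\<exists>c. \<forall>p. f p = c) \<or> (\<exists>\<phi>. nested \<phi> \<and> (\<forall>p. eval \<phi> p = f p))"

definition chow_w :: "(('n \<Rightarrow> bool) \<Rightarrow> bool) \<Rightarrow> nat" where
  "chow_w f = card {p. f p}"

definition chow_wi :: "(('n \<Rightarrow> bool) \<Rightarrow> bool) \<Rightarrow> 'n \<Rightarrow> nat" where
  "chow_wi f i = card {p. f p \<and> p i}"

definition chow :: "(('n::finite \<Rightarrow> bool) \<Rightarrow> bool) \<Rightarrow> bool" where
  "chow f \<longleftrightarrow> (\<forall>g. chow_w g = chow_w f \<and> (\<forall>i. chow_wi g i = chow_wi f i) \<longrightarrow> g = f)"

definition g1 :: "bool \<Rightarrow> bool \<Rightarrow> bool \<Rightarrow> bool \<Rightarrow> bool" where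
  "g1 x y z u = ((x \<or> y) \<and> (z \<or> u))"

definition g2 :: "bool \<Rightarrow> bool \<Rightarrow> bool \<Rightarrow> bool \<Rightarrow> bool" where
  "g2 x y z u = ((x \<and> y) \<or> (z \<and> u))"

definition restricts_to :: "(('n \<Rightarrow> bool) \<Rightarrow> bool) \<Rightarrow> (bool \<Rightarrow> bool \<Rightarrow> bool \<Rightarrow> bool \<Rightarrow> bool) \<Rightarrow> bool" where
  "restricts_to f g \<longleftrightarrow> (\<exists>a b c d \<rho>. distinct [a, b, c, d] \<and>
      (\<forall>x y z u. f (\<rho>(a := x, b := y, c := z, d := u)) = g x y z u))"

text \<open>g1/g2 with some variables negated: variable x is negated iff its flag s is True.\<close>
definition forbidden_restriction :: "(('n \<Rightarrow> bool) \<Rightarrow> bool) \<Rightarrow> bool" where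
  "forbidden_restriction f \<longleftrightarrow> (\<exists>s1 s2 s3 s4.
      restricts_to f (\<lambda>x y z u. g1 (x \<noteq> s1) (y \<noteq> s2) (z \<noteq> s3) (u \<noteq> s4)) \<or>
      restricts_to f (\<lambda>x y z u. g2 (x \<noteq> s1) (y \<noteq> s2) (z \<noteq> s3) (u \<noteq> s4)))"

end

theory Submission
  imports Defs
begin

text \<open>A linear read-once function is a threshold function: adding a literal by a disjunction
  or a conjunction only needs a weight exceeding the range of the previous linear form.
  Threshold functions are Chow, because a function with the same Chow parameters differs from f
  by a vector orthogonal to every affine form, in particular to the separating one.

  Conversely, g1 (and dually g2) is not Chow: exchanging its true points 1010, 0101 with its
  false points 1100, 0011 preserves all Chow parameters, and this exchange lifts through any
  restriction.  Finally, a read-once function without such a restriction is linear read-once: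
  by induction on a read-once formula, a conjunction of two nested formulas on disjoint
  variables is again nested unless both are headed by a disjunction, in which case restricting
  the two tails to single literals exhibits g1.\<close>

section \<open>Linear read-once functions are Chow\<close>

definition affine_form :: "int \<Rightarrow> ('n::finite \<Rightarrow> int) \<Rightarrow> ('n \<Rightarrow> bool) \<Rightarrow> int" where
  "affine_form c a p = c + (\<Sum>i\<in>UNIV. a i * of_bool (p i))"

lemma int_card_eq_sum_of_bool:
  fixes P :: "'a::finite \<Rightarrow> bool"
  shows "int (card {p. P p}) = (\<Sum>p\<in>UNIV. of_bool (P p))"
  by (simp add: sum.If_cases)

lemma sum_times_affine_form:
  fixes d :: "('n::finite \<Rightarrow> bool) \<Rightarrow> int"
  shows "(\<Sum>p\<in>UNIV. d p * affine_form c a p)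
    = c * (\<Sum>p\<in>UNIV. d p) + (\<Sum>i\<in>UNIV. a i * (\<Sum>p\<in>UNIV. d p * of_bool (p i)))"
proof -
  have "(\<Sum>p\<in>UNIV. d p * affine_form c a p)
      = (\<Sum>p\<in>UNIV. c * d p + (\<Sum>i\<in>UNIV. a i * (d p * of_bool (p i))))"
    unfolding affine_form_def distrib_left sum_distrib_left by (simp only: mult_ac)
  also have "\<dots> = c * (\<Sum>p\<in>UNIV. d p) + (\<Sum>p\<in>UNIV. \<Sum>i\<in>UNIV. a i * (d p * of_bool (p i)))"
    by (simp add: sum.distrib sum_distrib_left)
  also have "\<dots> = c * (\<Sum>p\<in>UNIV. d p) + (\<Sum>i\<in>UNIV. a i * (\<Sum>p\<in>UNIV. d p * of_bool (p i)))"
    by (subst sum.swap) (simp only: sum_distrib_left)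
  finally show ?thesis .
qed

lemma same_chow_parameters_iff:
  fixes f g :: "('n::finite \<Rightarrow> bool) \<Rightarrow> bool"
  shows "(chow_w g = chow_w f \<and> (\<forall>i. chow_wi g i = chow_wi f i)) \<longleftrightarrow>
    (\<forall>c a. (\<Sum>p\<in>UNIV. (of_bool (f p) - of_bool (g p)) * affine_form c a p) = 0)"
proof -
  define d where "d p = (of_bool (f p) - of_bool (g p) :: int)" for p
  have w: "(\<Sum>p\<in>UNIV. d p) = int (chow_w f) - int (chow_w g)"
    unfolding d_def chow_w_def int_card_eq_sum_of_bool sum_subtractf ..
  have wi: "(\<Sum>p\<in>UNIV. d p * of_bool (p i)) = int (chow_wi f i) - int (chow_wi g i)" for i
    unfolding d_def chow_wi_def int_card_eq_sum_of_bool of_bool_conj left_diff_distrib sum_subtractf ..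
  have delta: "(\<Sum>j\<in>UNIV. of_bool (j = i) * X j) = (X i :: int)" for i :: 'n and X
    by (simp add: if_distrib cong: if_cong)
  show ?thesis
  proof
    assume "chow_w g = chow_w f \<and> (\<forall>i. chow_wi g i = chow_wi f i)"
    then show "\<forall>c a. (\<Sum>p\<in>UNIV. (of_bool (f p) - of_bool (g p)) * affine_form c a p) = 0"
      unfolding d_def[symmetric] sum_times_affine_form w wi by simp
  next
    assume orth: "\<forall>c a. (\<Sum>p\<in>UNIV. (of_bool (f p) - of_bool (g p)) * affine_form c a p) = 0"
    have "chow_w g = chow_w f"
      using orth[rule_format, of 1 "\<lambda>_. 0", unfolded d_def[symmetric] sum_times_affine_form] w
      by simp
    moreover have "chow_wi g i = chow_wi f i" for i
      using orth[rule_format, of 0 "\<lambda>j. of_bool (j = i)", unfolded d_def[symmetric] sum_times_affine_form delta] wi[of i]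
      by simp
    ultimately show "chow_w g = chow_w f \<and> (\<forall>i. chow_wi g i = chow_wi f i)" by blast
  qed
qed

definition threshold :: "(('n::finite \<Rightarrow> bool) \<Rightarrow> bool) \<Rightarrow> bool" where
  "threshold f \<longleftrightarrow> (\<exists>c a. \<forall>p. affine_form c a p \<noteq> 0 \<and> (f p \<longleftrightarrow> 0 < affine_form c a p))"

lemma threshold_imp_chow:
  fixes f :: "('n::finite \<Rightarrow> bool) \<Rightarrow> bool"
  assumes "threshold f"
  shows "chow f"
  unfolding chow_def
proof (intro allI impI)
  fix g :: "('n \<Rightarrow> bool) \<Rightarrow> bool"
  assume "chow_w g = chow_w f \<and> (\<forall>i. chow_wi g i = chow_wi f i)"
  then have orth: "(\<Sum>p\<in>UNIV. (of_bool (f p) - of_bool (g p)) * affine_form c a p) = 0" for c a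
    by (simp add: same_chow_parameters_iff)
  obtain c a where ca: "\<And>p. affine_form c a p \<noteq> 0 \<and> (f p \<longleftrightarrow> 0 < affine_form c a p)"
    using assms unfolding threshold_def by blast
  have nonneg: "0 \<le> (of_bool (f p) - of_bool (g p)) * affine_form c a p" for p
    using ca[of p] by (cases "f p"; cases "g p") auto
  have "(of_bool (f p) - of_bool (g p)) * affine_form c a p = 0" for p
    using orth[of c a] nonneg by (simp add: sum_nonneg_eq_0_iff)
  then show "g = f"
    using ca by (intro ext) (metis mult_eq_0_iff of_bool_eq_iff eq_iff_diff_eq_0)
qed

lemma threshold_const: "threshold (\<lambda>p. b)"
  unfolding threshold_def
  by (rule exI[of _ "if b then 1 else -1"], rule exI[of _ "\<lambda>_. 0"]) (simp add: affine_form_def)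

lemma threshold_neg: "threshold f \<Longrightarrow> threshold (\<lambda>p. \<not> f p)"
  unfolding threshold_def
proof (elim exE)
  fix c a assume "\<forall>p. affine_form c a p \<noteq> 0 \<and> (f p \<longleftrightarrow> 0 < affine_form c a p)"
  moreover have "affine_form (- c) (\<lambda>i. - a i) p = - affine_form c a p" for p
    by (simp add: affine_form_def sum_negf)
  ultimately show "\<exists>c a. \<forall>p. affine_form c a p \<noteq> 0 \<and> ((\<not> f p) \<longleftrightarrow> 0 < affine_form c a p)"
    by (intro exI[of _ "- c"] exI[of _ "\<lambda>i. - a i"]) auto
qed

lemma affine_form_add_literal:
  "affine_form (c + of_bool s * k) (a(x := a x + (if s then - k else k))) p
     = affine_form c a p + k * of_bool (p x \<noteq> s)"
proof -
  have "(\<Sum>i\<in>UNIV. (a(x := a x + (if s then - k else k))) i * of_bool (p i))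
      = (\<Sum>i\<in>UNIV. a i * of_bool (p i) + (if i = x then (if s then - k else k) * of_bool (p x) else 0))"
    by (rule sum.cong) (auto simp: distrib_right)
  then show ?thesis
    by (simp add: affine_form_def sum.distrib algebra_simps)
qed

lemma threshold_disj_literal:
  assumes "threshold g"
  shows "threshold (\<lambda>p. (p x \<noteq> s) \<or> g p)"
proof -
  obtain c a where ca: "\<And>p. affine_form c a p \<noteq> 0 \<and> (g p \<longleftrightarrow> 0 < affine_form c a p)"
    using assms unfolding threshold_def by blast
  define k where "k = 1 + (\<Sum>p\<in>UNIV. \<bar>affine_form c a p\<bar>)"
  have bound: "\<bar>affine_form c a p\<bar> < k" for p
    using member_le_sum[of p UNIV "\<lambda>p. \<bar>affine_form c a p\<bar>"] by (simp add: k_def)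
  have "affine_form c a p + k * of_bool (p x \<noteq> s) \<noteq> 0 \<and>
      ((p x \<noteq> s) \<or> g p \<longleftrightarrow> 0 < affine_form c a p + k * of_bool (p x \<noteq> s))" for p
    using ca[of p] bound[of p] by (cases "p x \<noteq> s") auto
  then show ?thesis
    unfolding threshold_def affine_form_add_literal[symmetric] by blast
qed

lemma threshold_conj_literal:
  assumes "threshold g"
  shows "threshold (\<lambda>p. (p x \<noteq> s) \<and> g p)"
  using threshold_neg[OF threshold_disj_literal[OF threshold_neg[OF assms], of x "\<not> s"]] by simp

definition lit :: "'n \<Rightarrow> bool \<Rightarrow> 'n formula" where
  "lit x s = (if s then FNeg (FVar x) else FVar x)"

lemma eval_lit [simp]: "eval (lit x s) p = (p x \<noteq> s)"
  by (simp add: lit_def)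

lemma var_occs_lit [simp]: "var_occs (lit x s) = [x]"
  by (simp add: lit_def)

lemma nested_lit: "nested (lit x s)"
  by (simp add: lit_def nested.intros)

lemma nested_or_lit: "nested t \<Longrightarrow> x \<notin> set (var_occs t) \<Longrightarrow> nested (FOr (lit x s) t)"
  by (simp add: lit_def nested.intros)

lemma nested_and_lit: "nested t \<Longrightarrow> x \<notin> set (var_occs t) \<Longrightarrow> nested (FAnd (lit x s) t)"
  by (simp add: lit_def nested.intros)

lemma nested_lit_induct [consumes 1, case_names Lit Or And]:
  assumes "nested \<phi>"
    and "\<And>x s. P (lit x s)"
    and "\<And>x s t. nested t \<Longrightarrow> x \<notin> set (var_occs t) \<Longrightarrow> P t \<Longrightarrow> P (FOr (lit x s) t)"
    and "\<And>x s t. nested t \<Longrightarrow> x \<notin> set (var_occs t) \<Longrightarrow> P t \<Longrightarrow> P (FAnd (lit x s) t)"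
  shows "P \<phi>"
  using assms(1)
proof (induction rule: nested.induct)
  case (lit_pos x) then show ?case using assms(2)[of x False] by (simp add: lit_def)
next
  case (lit_neg x) then show ?case using assms(2)[of x True] by (simp add: lit_def)
next
  case (or_pos t x) then show ?case using assms(3)[of t x False] by (simp add: lit_def)
next
  case (and_pos t x) then show ?case using assms(4)[of t x False] by (simp add: lit_def)
next
  case (or_neg t x) then show ?case using assms(3)[of t x True] by (simp add: lit_def)
next
  case (and_neg t x) then show ?case using assms(4)[of t x True] by (simp add: lit_def)
qed

lemma nested_imp_threshold:
  fixes \<phi> :: "'n::finite formula"
  assumes "nested \<phi>"
  shows "threshold (eval \<phi>)"
  using assms
proof (induction rule: nested_lit_induct)
  case (Lit x s)
  then show ?case using threshold_disj_literal[OF threshold_const[of False]] by simp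
next
  case (Or x s t)
  then show ?case using threshold_disj_literal[of "eval t"] by simp
next
  case (And x s t)
  then show ?case using threshold_conj_literal[of "eval t"] by simp
qed

lemma linear_read_once_imp_chow:
  fixes f :: "('n::finite \<Rightarrow> bool) \<Rightarrow> bool"
  assumes "linear_read_once f"
  shows "chow f"
proof -
  have "threshold f"
    using assms unfolding linear_read_once_def
  proof (elim disjE exE conjE)
    fix c assume "\<forall>p. f p = c"
    then have "f = (\<lambda>p. c)" by blast
    then show "threshold f" by (simp add: threshold_const)
  next
    fix \<phi> assume "nested \<phi>" "\<forall>p. eval \<phi> p = f p"
    then have "f = eval \<phi>" by blast
    then show "threshold f" using \<open>nested \<phi>\<close> by (simp add: nested_imp_threshold)
  qed
  then show ?thesis by (rule threshold_imp_chow)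
qed

section \<open>Forbidden restrictions are not Chow\<close>

lemma affine_form_balanced:
  assumes "\<And>i. of_bool (A i) + of_bool (B i) = (of_bool (C i) + of_bool (D i) :: int)"
  shows "affine_form c a A + affine_form c a B = affine_form c a C + affine_form c a D"
proof -
  have "(\<Sum>i\<in>UNIV. a i * of_bool (A i)) + (\<Sum>i\<in>UNIV. a i * of_bool (B i))
      = (\<Sum>i\<in>UNIV. a i * of_bool (C i)) + (\<Sum>i\<in>UNIV. a i * of_bool (D i))"
    unfolding sum.distrib[symmetric] distrib_left[symmetric] assms ..
  then show ?thesis by (simp only: affine_form_def algebra_simps)
qed

lemma exchange_imp_not_chow:
  fixes f :: "('n::finite \<Rightarrow> bool) \<Rightarrow> bool"
  assumes "f A = f B" "f C = f D" "f A \<noteq> f C" "A \<noteq> B" "C \<noteq> D"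
    and balanced: "\<And>i. of_bool (A i) + of_bool (B i) = (of_bool (C i) + of_bool (D i) :: int)"
  shows "\<not> chow f"
proof
  assume "chow f"
  have "A \<noteq> C" "A \<noteq> D" "B \<noteq> C" "B \<noteq> D"
    using assms(1-3) by auto
  define Q where "Q = {A, B, C, D}"
  have sum_Q: "(\<Sum>p\<in>Q. h p) = h A + h B + h C + h D" for h :: "_ \<Rightarrow> int"
    using \<open>A \<noteq> B\<close> \<open>C \<noteq> D\<close> \<open>A \<noteq> C\<close> \<open>A \<noteq> D\<close> \<open>B \<noteq> C\<close> \<open>B \<noteq> D\<close>
    by (simp add: Q_def)
  define g where "g p = (if p \<in> Q then \<not> f p else f p)" for p
  have "g A \<noteq> f A" by (simp add: g_def Q_def)
  moreover have "(\<Sum>p\<in>UNIV. (of_bool (f p) - of_bool (g p)) * affine_form c a p) = 0" for c a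
  proof -
    define e where "e = (if f A then 1 else -1 :: int)"
    have "(\<Sum>p\<in>UNIV. (of_bool (f p) - of_bool (g p)) * affine_form c a p)
        = (\<Sum>p\<in>Q. (of_bool (f p) - of_bool (g p)) * affine_form c a p)"
      by (rule sum.mono_neutral_right) (auto simp: g_def)
    also have "\<dots> = e * (affine_form c a A + affine_form c a B - affine_form c a C - affine_form c a D)"
      unfolding sum_Q using assms(1-3) by (cases "f A") (auto simp: g_def Q_def e_def algebra_simps)
    also have "\<dots> = 0"
      using affine_form_balanced[of A B C D c a] balanced by simp
    finally show ?thesis .
  qed
  then have "g = f"
    using \<open>chow f\<close> unfolding chow_def by (simp add: same_chow_parameters_iff)
  ultimately show False by simp
qed

lemma restriction_imp_not_chow:
  fixes f :: "('n::finite \<Rightarrow> bool) \<Rightarrow> bool"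
  assumes "distinct [a, b, c, d]"
    and restr: "\<And>x y z u. f (\<rho>(a := x, b := y, c := z, d := u)) = h (x \<noteq> s1) (y \<noteq> s2) (z \<noteq> s3) (u \<noteq> s4)"
    and "h True False True False = h False True False True"
    and "h True True False False = h False False True True"
    and "h True False True False \<noteq> h True True False False"
  shows "\<not> chow f"
proof -
  define P where "P X Y Z U = \<rho>(a := X \<noteq> s1, b := Y \<noteq> s2, c := Z \<noteq> s3, d := U \<noteq> s4)" for X Y Z U
  have f_P: "f (P X Y Z U) = h X Y Z U" for X Y Z U
  proof -
    have "((X \<noteq> s) \<noteq> s) = X" for X s :: bool by auto
    then show ?thesis unfolding P_def restr by presburger
  qed
  have P_at: "P X Y Z U a = (X \<noteq> s1)" "P X Y Z U b = (Y \<noteq> s2)"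
    "P X Y Z U c = (Z \<noteq> s3)" "P X Y Z U d = (U \<noteq> s4)" for X Y Z U
    using assms(1) by (auto simp: P_def)
  have "f (P True False True False) = f (P False True False True)"
    unfolding f_P by (rule assms(3))
  moreover have "f (P True True False False) = f (P False False True True)"
    unfolding f_P by (rule assms(4))
  moreover have "f (P True False True False) \<noteq> f (P True True False False)"
    unfolding f_P by (rule assms(5))
  moreover have "P True False True False \<noteq> P False True False True"
    using P_at(1)[of True False True False] P_at(1)[of False True False True] by auto
  moreover have "P True True False False \<noteq> P False False True True"
    using P_at(1)[of True True False False] P_at(1)[of False False True True] by auto
  moreover have "of_bool (P True False True False i) + of_bool (P False True False True i)
      = (of_bool (P True True False False i) + of_bool (P False False True True i) :: int)" for i
    by (cases "i \<in> {a, b, c, d}") (auto simp: P_at, auto simp: P_def)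
  ultimately show ?thesis
    by (rule exchange_imp_not_chow)
qed

lemma forbidden_restriction_imp_not_chow:
  fixes f :: "('n::finite \<Rightarrow> bool) \<Rightarrow> bool"
  assumes "forbidden_restriction f"
  shows "\<not> chow f"
  using assms unfolding forbidden_restriction_def restricts_to_def
proof (elim exE disjE conjE)
  fix s1 s2 s3 s4 and a b c d :: 'n and \<rho> :: "'n \<Rightarrow> bool"
  assume "distinct [a, b, c, d]"
  then show "\<forall>x y z u. f (\<rho>(a := x, b := y, c := z, d := u)) = g1 (x \<noteq> s1) (y \<noteq> s2) (z \<noteq> s3) (u \<noteq> s4)
      \<Longrightarrow> \<not> chow f"
    by (rule restriction_imp_not_chow[of a b c d f \<rho> g1 s1 s2 s3 s4]) (simp_all add: g1_def)
  from \<open>distinct [a, b, c, d]\<close>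
  show "\<forall>x y z u. f (\<rho>(a := x, b := y, c := z, d := u)) = g2 (x \<noteq> s1) (y \<noteq> s2) (z \<noteq> s3) (u \<noteq> s4)
      \<Longrightarrow> \<not> chow f"
    by (rule restriction_imp_not_chow[of a b c d f \<rho> g2 s1 s2 s3 s4]) (simp_all add: g2_def)
qed

section \<open>Read-once functions without forbidden restrictions are linear read-once\<close>

definition depends_only_on :: "'n set \<Rightarrow> (('n \<Rightarrow> bool) \<Rightarrow> bool) \<Rightarrow> bool" where
  "depends_only_on V f \<longleftrightarrow> (\<forall>p q. (\<forall>i\<in>V. p i = q i) \<longrightarrow> f p = f q)"

lemma eval_cong: "(\<And>i. i \<in> set (var_occs \<phi>) \<Longrightarrow> p i = q i) \<Longrightarrow> eval \<phi> p = eval \<phi> q"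
  by (induction \<phi>) simp_all

lemma eval_as_fun:
  "eval (FConst b) = (\<lambda>p. b)" "eval (FVar x) = (\<lambda>p. p x)" "eval (FNeg t) = (\<lambda>p. \<not> eval t p)"
  "eval (FAnd s t) = (\<lambda>p. eval s p \<and> eval t p)" "eval (FOr s t) = (\<lambda>p. eval s p \<or> eval t p)"
  by (simp_all add: fun_eq_iff)

lemma depends_only_on_eval: "depends_only_on (set (var_occs \<phi>)) (eval \<phi>)"
  unfolding depends_only_on_def by (intro allI impI eval_cong) blast

definition restricts_within ::
    "'n set \<Rightarrow> (('n \<Rightarrow> bool) \<Rightarrow> bool) \<Rightarrow> (bool \<Rightarrow> bool \<Rightarrow> bool \<Rightarrow> bool \<Rightarrow> bool) \<Rightarrow> bool" where
  "restricts_within V f g \<longleftrightarrow> (\<exists>a b c d \<rho>. distinct [a, b, c, d] \<and> {a, b, c, d} \<subseteq> V \<and>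
      (\<forall>x y z u. f (\<rho>(a := x, b := y, c := z, d := u)) = g x y z u))"

definition forbidden_within :: "'n set \<Rightarrow> (('n \<Rightarrow> bool) \<Rightarrow> bool) \<Rightarrow> bool" where
  "forbidden_within V f \<longleftrightarrow> (\<exists>s1 s2 s3 s4.
      restricts_within V f (\<lambda>x y z u. g1 (x \<noteq> s1) (y \<noteq> s2) (z \<noteq> s3) (u \<noteq> s4)) \<or>
      restricts_within V f (\<lambda>x y z u. g2 (x \<noteq> s1) (y \<noteq> s2) (z \<noteq> s3) (u \<noteq> s4)))"

lemma forbidden_within_g1I:
  "restricts_within V f (\<lambda>x y z u. g1 (x \<noteq> s1) (y \<noteq> s2) (z \<noteq> s3) (u \<noteq> s4)) \<Longrightarrow> forbidden_within V f"
  unfolding forbidden_within_def by (intro exI[of _ s1] exI[of _ s2] exI[of _ s3] exI[of _ s4] disjI1)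

lemma forbidden_within_g2I:
  "restricts_within V f (\<lambda>x y z u. g2 (x \<noteq> s1) (y \<noteq> s2) (z \<noteq> s3) (u \<noteq> s4)) \<Longrightarrow> forbidden_within V f"
  unfolding forbidden_within_def by (intro exI[of _ s1] exI[of _ s2] exI[of _ s3] exI[of _ s4] disjI2)

lemma forbidden_withinE:
  assumes "forbidden_within V f"
  obtains s1 s2 s3 s4 where "restricts_within V f (\<lambda>x y z u. g1 (x \<noteq> s1) (y \<noteq> s2) (z \<noteq> s3) (u \<noteq> s4))"
  | s1 s2 s3 s4 where "restricts_within V f (\<lambda>x y z u. g2 (x \<noteq> s1) (y \<noteq> s2) (z \<noteq> s3) (u \<noteq> s4))"
  using assms unfolding forbidden_within_def by blast

lemma restricts_withinI:
  "distinct [a, b, c, d] \<Longrightarrow> {a, b, c, d} \<subseteq> V \<Longrightarrow>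
    (\<And>x y z u. f (\<rho>(a := x, b := y, c := z, d := u)) = g x y z u) \<Longrightarrow> restricts_within V f g"
  unfolding restricts_within_def by blast

lemma restricts_within_imp_restricts_to: "restricts_within V f g \<Longrightarrow> restricts_to f g"
  unfolding restricts_within_def restricts_to_def by (elim exE conjE) (intro exI conjI)

lemma forbidden_within_imp_forbidden_restriction:
  "forbidden_within V f \<Longrightarrow> forbidden_restriction f"
  unfolding forbidden_within_def forbidden_restriction_def
  using restricts_within_imp_restricts_to by meson

lemma restricts_within_mono: "restricts_within V f g \<Longrightarrow> V \<subseteq> W \<Longrightarrow> restricts_within W f g"
  unfolding restricts_within_def by (elim exE conjE) (intro exI conjI, assumption, blast, assumption)

lemma forbidden_within_mono: "forbidden_within V f \<Longrightarrow> V \<subseteq> W \<Longrightarrow> forbidden_within W f"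
  unfolding forbidden_within_def using restricts_within_mono by meson

lemma restricts_within_neg:
  "restricts_within V f g \<Longrightarrow> restricts_within V (\<lambda>p. \<not> f p) (\<lambda>x y z u. \<not> g x y z u)"
  unfolding restricts_within_def by auto

lemma forbidden_within_neg:
  assumes "forbidden_within V f"
  shows "forbidden_within V (\<lambda>p. \<not> f p)"
  using assms
proof (cases rule: forbidden_withinE)
  case (1 s1 s2 s3 s4)
  from restricts_within_neg[OF this]
  have "restricts_within V (\<lambda>p. \<not> f p)
      (\<lambda>x y z u. g2 (x \<noteq> (\<not> s1)) (y \<noteq> (\<not> s2)) (z \<noteq> (\<not> s3)) (u \<noteq> (\<not> s4)))"
    by (simp add: g1_def g2_def)
  then show ?thesis by (rule forbidden_within_g2I)
next
  case (2 s1 s2 s3 s4)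
  from restricts_within_neg[OF this]
  have "restricts_within V (\<lambda>p. \<not> f p)
      (\<lambda>x y z u. g1 (x \<noteq> (\<not> s1)) (y \<noteq> (\<not> s2)) (z \<noteq> (\<not> s3)) (u \<noteq> (\<not> s4)))"
    by (simp add: g1_def g2_def)
  then show ?thesis by (rule forbidden_within_g1I)
qed

text \<open>Fix the variables of the second conjunct to a point where it holds.\<close>
lemma restricts_within_conj:
  assumes "restricts_within V f g" "depends_only_on V f" "depends_only_on W h"
    and "V \<inter> W = {}" "h q"
  shows "restricts_within V (\<lambda>p. f p \<and> h p) g"
proof -
  obtain a b c d \<rho> where abcd: "distinct [a, b, c, d]" "{a, b, c, d} \<subseteq> V"
    and restr: "\<And>x y z u. f (\<rho>(a := x, b := y, c := z, d := u)) = g x y z u"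
    using assms(1) unfolding restricts_within_def by (elim exE conjE) (rule that, assumption+, blast)
  define \<rho>' where "\<rho>' i = (if i \<in> W then q i else \<rho> i)" for i
  have "f (\<rho>'(a := x, b := y, c := z, d := u)) = f (\<rho>(a := x, b := y, c := z, d := u))" for x y z u
    using assms(4) by (intro assms(2)[unfolded depends_only_on_def, rule_format]) (auto simp: \<rho>'_def)
  then have f_\<rho>': "f (\<rho>'(a := x, b := y, c := z, d := u)) = g x y z u" for x y z u
    by (simp add: restr)
  have "h (\<rho>'(a := x, b := y, c := z, d := u)) = h q" for x y z u
    using assms(4) abcd(2) by (intro assms(3)[unfolded depends_only_on_def, rule_format]) (auto simp: \<rho>'_def)
  with \<open>h q\<close> have h_\<rho>': "h (\<rho>'(a := x, b := y, c := z, d := u))" for x y z u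
    by simp
  from abcd show ?thesis
    by (rule restricts_withinI[where \<rho> = \<rho>']) (simp add: f_\<rho>' h_\<rho>')
qed

lemma forbidden_within_conj:
  assumes "forbidden_within V f" "depends_only_on V f" "depends_only_on W h"
    and "V \<inter> W = {}" "h q"
  shows "forbidden_within V (\<lambda>p. f p \<and> h p)"
  using assms(1)
proof (cases rule: forbidden_withinE)
  case 1
  from restricts_within_conj[where q = q, OF 1 assms(2-5)] show ?thesis
    by (rule forbidden_within_g1I)
next
  case 2
  from restricts_within_conj[where q = q, OF 2 assms(2-5)] show ?thesis
    by (rule forbidden_within_g2I)
qed

definition lro_within :: "'n set \<Rightarrow> (('n \<Rightarrow> bool) \<Rightarrow> bool) \<Rightarrow> bool" where
  "lro_within V f \<longleftrightarrow>
     (\<exists>c. \<forall>p. f p = c) \<or> (\<exists>\<phi>. nested \<phi> \<and> set (var_occs \<phi>) \<subseteq> V \<and> (\<forall>p. eval \<phi> p = f p))"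

text \<open>The invariant of the induction over read-once formulas.  The set V bounds the variables
  involved, so that two conjuncts on disjoint variables can be combined.\<close>
definition lro_or_forbidden_within :: "'n set \<Rightarrow> (('n \<Rightarrow> bool) \<Rightarrow> bool) \<Rightarrow> bool" where
  "lro_or_forbidden_within V f \<longleftrightarrow> lro_within V f \<or> forbidden_within V f"

lemma lro_within_imp_linear_read_once: "lro_within V f \<Longrightarrow> linear_read_once f"
  unfolding lro_within_def linear_read_once_def by blast

lemma lro_within_mono: "lro_within V f \<Longrightarrow> V \<subseteq> W \<Longrightarrow> lro_within W f"
  unfolding lro_within_def by blast

lemma lro_or_forbidden_within_mono:
  "lro_or_forbidden_within V f \<Longrightarrow> V \<subseteq> W \<Longrightarrow> lro_or_forbidden_within W f"
  unfolding lro_or_forbidden_within_def using lro_within_mono forbidden_within_mono by blast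

lemma lro_within_nested: "nested \<phi> \<Longrightarrow> lro_within (set (var_occs \<phi>)) (eval \<phi>)"
  unfolding lro_within_def by blast

lemma nested_neg:
  assumes "nested \<sigma>"
  shows "\<exists>\<tau>. nested \<tau> \<and> set (var_occs \<tau>) = set (var_occs \<sigma>) \<and> (\<forall>p. eval \<tau> p = (\<not> eval \<sigma> p))"
  using assms
proof (induction rule: nested_lit_induct)
  case (Lit x s)
  show ?case by (intro exI[of _ "lit x (\<not> s)"]) (auto simp: nested_lit)
next
  case (Or x s t)
  then obtain \<tau> where "nested \<tau>" "set (var_occs \<tau>) = set (var_occs t)" "\<forall>p. eval \<tau> p = (\<not> eval t p)"
    by blast
  with Or show ?case by (intro exI[of _ "FAnd (lit x (\<not> s)) \<tau>"]) (auto intro: nested_and_lit)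
next
  case (And x s t)
  then obtain \<tau> where "nested \<tau>" "set (var_occs \<tau>) = set (var_occs t)" "\<forall>p. eval \<tau> p = (\<not> eval t p)"
    by blast
  with And show ?case by (intro exI[of _ "FOr (lit x (\<not> s)) \<tau>"]) (auto intro: nested_or_lit)
qed

lemma lro_within_neg: "lro_within V f \<Longrightarrow> lro_within V (\<lambda>p. \<not> f p)"
  unfolding lro_within_def
proof (elim disjE exE conjE)
  fix c assume "\<forall>p. f p = c"
  then show "(\<exists>c. \<forall>p. (\<not> f p) = c) \<or> (\<exists>\<tau>. nested \<tau> \<and> set (var_occs \<tau>) \<subseteq> V \<and> (\<forall>p. eval \<tau> p = (\<not> f p)))"
    by auto
next
  fix \<sigma> assume "nested \<sigma>" "set (var_occs \<sigma>) \<subseteq> V" "\<forall>p. eval \<sigma> p = f p"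
  then show "(\<exists>c. \<forall>p. (\<not> f p) = c) \<or> (\<exists>\<tau>. nested \<tau> \<and> set (var_occs \<tau>) \<subseteq> V \<and> (\<forall>p. eval \<tau> p = (\<not> f p)))"
  proof -
    obtain \<tau> where "nested \<tau>" "set (var_occs \<tau>) = set (var_occs \<sigma>)" "\<forall>p. eval \<tau> p = (\<not> eval \<sigma> p)"
      using nested_neg[OF \<open>nested \<sigma>\<close>] by blast
    with \<open>set (var_occs \<sigma>) \<subseteq> V\<close> \<open>\<forall>p. eval \<sigma> p = f p\<close> show ?thesis
      by (intro disjI2 exI[of _ \<tau>]) simp
  qed
qed

lemma lro_or_forbidden_within_neg:
  "lro_or_forbidden_within V f \<Longrightarrow> lro_or_forbidden_within V (\<lambda>p. \<not> f p)"
  unfolding lro_or_forbidden_within_def using lro_within_neg forbidden_within_neg by blast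

lemma lro_or_forbidden_within_conj_literal:
  assumes "lro_or_forbidden_within V f" "depends_only_on V f" "x \<notin> V"
  shows "lro_or_forbidden_within (insert x V) (\<lambda>p. (p x \<noteq> s) \<and> f p)"
proof -
  consider (const) c where "\<And>p. f p = c"
    | (nested) \<sigma> where "nested \<sigma>" "set (var_occs \<sigma>) \<subseteq> V" "\<And>p. eval \<sigma> p = f p"
    | (forbidden) "forbidden_within V f"
    using assms(1) unfolding lro_or_forbidden_within_def lro_within_def by blast
  then show ?thesis
  proof cases
    case const
    then have "lro_within (insert x V) (\<lambda>p. (p x \<noteq> s) \<and> f p)"
      using lro_within_nested[OF nested_lit, of x s] unfolding lro_within_def
      by (cases c) auto
    then show ?thesis unfolding lro_or_forbidden_within_def ..
  next
    case nested
    then have "lro_within (insert x V) (\<lambda>p. (p x \<noteq> s) \<and> f p)"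
      using nested_and_lit[of \<sigma> x s] assms(3) unfolding lro_within_def
      by (intro disjI2 exI[of _ "FAnd (lit x s) \<sigma>"]) auto
    then show ?thesis unfolding lro_or_forbidden_within_def ..
  next
    case forbidden
    then have "forbidden_within V (\<lambda>p. f p \<and> (p x \<noteq> s))"
      by (rule forbidden_within_conj[where q = "\<lambda>_. \<not> s" and W = "{x}"])
        (use assms(2,3) in \<open>auto simp: depends_only_on_def\<close>)
    then have "forbidden_within (insert x V) (\<lambda>p. f p \<and> (p x \<noteq> s))"
      by (rule forbidden_within_mono) auto
    moreover have "(\<lambda>p. f p \<and> (p x \<noteq> s)) = (\<lambda>p. (p x \<noteq> s) \<and> f p)"
      by auto
    ultimately show ?thesis unfolding lro_or_forbidden_within_def by simp
  qed
qed

lemma nested_restricts_to_literal: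
  assumes "nested \<phi>"
  shows "\<exists>y\<in>set (var_occs \<phi>). \<exists>p s. \<forall>v. eval \<phi> (p(y := v)) = (v \<noteq> s)"
  using assms
proof (induction rule: nested_lit_induct)
  case (Lit x s)
  show ?case by (intro bexI[of _ x] exI[of _ "\<lambda>_. s"] exI[of _ s]) simp_all
next
  case (Or x s t)
  then obtain y p s' where y: "y \<in> set (var_occs t)" and t_lit: "\<And>v. eval t (p(y := v)) = (v \<noteq> s')"
    by blast
  have restr: "eval (FOr (lit x s) t) ((p(x := s))(y := v)) = (v \<noteq> s')" for v
  proof -
    have "eval t ((p(x := s))(y := v)) = eval t (p(y := v))"
      using Or.hyps(2) by (intro eval_cong) (metis fun_upd_apply)
    moreover have "x \<noteq> y" using y Or.hyps(2) by blast
    ultimately show ?thesis using t_lit by simp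
  qed
  moreover have "y \<in> set (var_occs (FOr (lit x s) t))" using y by simp
  ultimately show ?case by blast
next
  case (And x s t)
  then obtain y p s' where y: "y \<in> set (var_occs t)" and t_lit: "\<And>v. eval t (p(y := v)) = (v \<noteq> s')"
    by blast
  have restr: "eval (FAnd (lit x s) t) ((p(x := \<not> s))(y := v)) = (v \<noteq> s')" for v
  proof -
    have "eval t ((p(x := \<not> s))(y := v)) = eval t (p(y := v))"
      using And.hyps(2) by (intro eval_cong) (metis fun_upd_apply)
    moreover have "x \<noteq> y" using y And.hyps(2) by blast
    ultimately show ?thesis using t_lit by simp
  qed
  moreover have "y \<in> set (var_occs (FAnd (lit x s) t))" using y by simp
  ultimately show ?case by blast
qed

lemma eval_eq_literal:
  assumes "\<And>v. eval \<phi> (p(y := v)) = (v \<noteq> s)"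
    and "\<And>i. i \<in> set (var_occs \<phi>) \<Longrightarrow> i \<noteq> y \<Longrightarrow> r i = p i"
  shows "eval \<phi> r = (r y \<noteq> s)"
proof -
  have "eval \<phi> r = eval \<phi> (p(y := r y))"
    using assms(2) by (intro eval_cong) simp
  then show ?thesis using assms(1) by simp
qed

text \<open>The conjunction of two disjunctions (x \<or> t) \<and> (z \<or> t'): restricting t and t'
  to literals y and u leaves g1 on x, y, z, u.\<close>
lemma forbidden_within_conj_or_or:
  assumes \<sigma>: "nested t" "x \<notin> set (var_occs t)"
    and \<tau>: "nested t'" "z \<notin> set (var_occs t')"
    and disj: "set (var_occs (FOr (lit x s) t)) \<inter> set (var_occs (FOr (lit z r) t')) = {}"
  shows "forbidden_within (set (var_occs (FOr (lit x s) t)) \<union> set (var_occs (FOr (lit z r) t')))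
    (\<lambda>p. eval (FOr (lit x s) t) p \<and> eval (FOr (lit z r) t') p)"
proof -
  obtain y p s2 where y: "y \<in> set (var_occs t)" and p: "\<And>v. eval t (p(y := v)) = (v \<noteq> s2)"
    using nested_restricts_to_literal[OF \<sigma>(1)] by blast
  obtain u q s4 where u: "u \<in> set (var_occs t')" and q: "\<And>v. eval t' (q(u := v)) = (v \<noteq> s4)"
    using nested_restricts_to_literal[OF \<tau>(1)] by blast
  define \<rho> where "\<rho> i = (if i \<in> set (var_occs t') then q i else p i)" for i
  have dist: "distinct [x, y, z, u]"
    using y u \<sigma>(2) \<tau>(2) disj by auto
  define P where "P X Y Z U = \<rho>(x := X, y := Y, z := Z, u := U)" for X Y Z U
  have P_x: "P X Y Z U x = X" and P_y: "P X Y Z U y = Y"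
    and P_z: "P X Y Z U z = Z" and P_u: "P X Y Z U u = U" for X Y Z U
    using dist by (simp_all add: P_def)
  have "P X Y Z U i = p i" if "i \<in> set (var_occs t)" "i \<noteq> y" for X Y Z U i
  proof -
    have "i \<noteq> x" "i \<noteq> z" "i \<noteq> u" "\<rho> i = p i"
      using that \<sigma>(2) u disj by (auto simp: \<rho>_def)
    with that(2) show ?thesis by (simp add: P_def)
  qed
  from eval_eq_literal[OF p this] have t_P: "eval t (P X Y Z U) = (Y \<noteq> s2)" for X Y Z U
    by (simp add: P_y)
  have "P X Y Z U i = q i" if "i \<in> set (var_occs t')" "i \<noteq> u" for X Y Z U i
  proof -
    have "i \<noteq> x" "i \<noteq> y" "i \<noteq> z" "\<rho> i = q i"
      using that \<tau>(2) y disj by (auto simp: \<rho>_def)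
    with that(2) show ?thesis by (simp add: P_def)
  qed
  from eval_eq_literal[OF q this] have t'_P: "eval t' (P X Y Z U) = (U \<noteq> s4)" for X Y Z U
    by (simp add: P_u)
  have "restricts_within (set (var_occs (FOr (lit x s) t)) \<union> set (var_occs (FOr (lit z r) t')))
      (\<lambda>p. eval (FOr (lit x s) t) p \<and> eval (FOr (lit z r) t') p)
      (\<lambda>X Y Z U. g1 (X \<noteq> s) (Y \<noteq> s2) (Z \<noteq> r) (U \<noteq> s4))"
  proof (rule restricts_withinI[OF dist])
    show "{x, y, z, u} \<subseteq> set (var_occs (FOr (lit x s) t)) \<union> set (var_occs (FOr (lit z r) t'))"
      using y u by auto
    fix X Y Z U
    have "(eval (FOr (lit x s) t) (P X Y Z U) \<and> eval (FOr (lit z r) t') (P X Y Z U)) =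
        g1 (X \<noteq> s) (Y \<noteq> s2) (Z \<noteq> r) (U \<noteq> s4)"
      by (simp only: eval.simps eval_lit P_x P_z t_P t'_P g1_def)
    then show "(eval (FOr (lit x s) t) (\<rho>(x := X, y := Y, z := Z, u := U)) \<and>
        eval (FOr (lit z r) t') (\<rho>(x := X, y := Y, z := Z, u := U))) =
        g1 (X \<noteq> s) (Y \<noteq> s2) (Z \<noteq> r) (U \<noteq> s4)"
      by (simp only: P_def)
  qed
  then show ?thesis by (rule forbidden_within_g1I)
qed

lemma lro_or_forbidden_within_and_literal:
  assumes "lro_or_forbidden_within (set (var_occs \<sigma>) \<union> set (var_occs \<tau>)) (\<lambda>p. eval \<sigma> p \<and> eval \<tau> p)"
    and "x \<notin> set (var_occs \<sigma>) \<union> set (var_occs \<tau>)"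
  shows "lro_or_forbidden_within (set (var_occs (FAnd (lit x s) \<sigma>)) \<union> set (var_occs \<tau>))
    (\<lambda>p. eval (FAnd (lit x s) \<sigma>) p \<and> eval \<tau> p)"
  using lro_or_forbidden_within_conj_literal[OF assms(1) _ assms(2), of s]
    depends_only_on_eval[of "FAnd \<sigma> \<tau>"]
  by (simp add: eval_as_fun)

lemma lro_or_forbidden_within_conj_nested_or:
  assumes "nested \<tau>" "nested t" "x \<notin> set (var_occs t)"
    and "set (var_occs \<tau>) \<inter> set (var_occs (FOr (lit x s) t)) = {}"
  shows "lro_or_forbidden_within (set (var_occs \<tau>) \<union> set (var_occs (FOr (lit x s) t)))
    (\<lambda>p. eval \<tau> p \<and> eval (FOr (lit x s) t) p)"
  using assms(1,4)
proof (induction rule: nested_lit_induct)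
  case (Lit z r)
  then have "nested (FAnd (lit z r) (FOr (lit x s) t))"
    using assms(2,3) by (auto intro!: nested_and_lit nested_or_lit)
  from lro_within_nested[OF this] show ?case
    by (simp add: lro_or_forbidden_within_def eval_as_fun insert_commute conj_commute)
next
  case (Or z r t')
  then show ?case
    using forbidden_within_conj_or_or[OF Or.hyps(1,2) assms(2,3)]
    by (simp add: lro_or_forbidden_within_def)
next
  case (And z r t')
  then show ?case
    by (intro lro_or_forbidden_within_and_literal) auto
qed

lemma lro_or_forbidden_within_conj_nested:
  assumes "nested \<sigma>" "nested \<tau>" "set (var_occs \<sigma>) \<inter> set (var_occs \<tau>) = {}"
  shows "lro_or_forbidden_within (set (var_occs \<sigma>) \<union> set (var_occs \<tau>)) (\<lambda>p. eval \<sigma> p \<and> eval \<tau> p)"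
  using assms(1,3)
proof (induction rule: nested_lit_induct)
  case (Lit x s)
  then have "nested (FAnd (lit x s) \<tau>)"
    using assms(2) by (auto intro!: nested_and_lit)
  from lro_within_nested[OF this] show ?case
    by (simp add: lro_or_forbidden_within_def eval_as_fun)
next
  case (Or x s t)
  then have "lro_or_forbidden_within (set (var_occs \<tau>) \<union> set (var_occs (FOr (lit x s) t)))
      (\<lambda>p. eval \<tau> p \<and> eval (FOr (lit x s) t) p)"
    using assms(2) by (intro lro_or_forbidden_within_conj_nested_or) auto
  then show ?case
    by (simp add: Un_commute conj_commute)
next
  case (And x s t)
  then show ?case
    by (intro lro_or_forbidden_within_and_literal) auto
qed

lemma lro_within_conj:
  assumes "lro_within V f" "lro_within W g" "V \<inter> W = {}"
  shows "lro_or_forbidden_within (V \<union> W) (\<lambda>p. f p \<and> g p)"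
proof (cases "(\<exists>c. \<forall>p. f p = c) \<or> (\<exists>c. \<forall>p. g p = c)")
  case True
  then consider "\<forall>p. f p" | "\<forall>p. g p" | "\<forall>p. \<not> f p \<or> \<not> g p"
    by (metis (full_types))
  then have "lro_within (V \<union> W) (\<lambda>p. f p \<and> g p)"
  proof cases
    case 1
    then show ?thesis using lro_within_mono[OF assms(2), of "V \<union> W"] by simp
  next
    case 2
    then show ?thesis using lro_within_mono[OF assms(1), of "V \<union> W"] by simp
  next
    case 3
    then show ?thesis unfolding lro_within_def by auto
  qed
  then show ?thesis unfolding lro_or_forbidden_within_def ..
next
  case False
  then obtain \<sigma> \<tau> where \<sigma>: "nested \<sigma>" "set (var_occs \<sigma>) \<subseteq> V" "\<And>p. eval \<sigma> p = f p"
    and \<tau>: "nested \<tau>" "set (var_occs \<tau>) \<subseteq> W" "\<And>p. eval \<tau> p = g p"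
    using assms(1,2) unfolding lro_within_def by blast
  have "set (var_occs \<sigma>) \<inter> set (var_occs \<tau>) = {}"
    using \<sigma>(2) \<tau>(2) assms(3) by blast
  from lro_or_forbidden_within_conj_nested[OF \<sigma>(1) \<tau>(1) this]
  have "lro_or_forbidden_within (set (var_occs \<sigma>) \<union> set (var_occs \<tau>)) (\<lambda>p. f p \<and> g p)"
    by (simp only: \<sigma>(3) \<tau>(3))
  then show ?thesis
    by (rule lro_or_forbidden_within_mono) (use \<sigma>(2) \<tau>(2) in blast)
qed

lemma lro_or_forbidden_within_conj:
  assumes "lro_or_forbidden_within V f" "lro_or_forbidden_within W g"
    and "depends_only_on V f" "depends_only_on W g" "V \<inter> W = {}"
  shows "lro_or_forbidden_within (V \<union> W) (\<lambda>p. f p \<and> g p)"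
proof (cases "(\<exists>q. f q) \<and> (\<exists>q. g q)")
  case False
  then have "lro_within (V \<union> W) (\<lambda>p. f p \<and> g p)"
    unfolding lro_within_def by auto
  then show ?thesis unfolding lro_or_forbidden_within_def ..
next
  case True
  then obtain q q' where "f q" "g q'" by blast
  consider "forbidden_within V f" | "forbidden_within W g" | "lro_within V f" "lro_within W g"
    using assms(1,2) unfolding lro_or_forbidden_within_def by blast
  then show ?thesis
  proof cases
    case 1
    from forbidden_within_conj[where q = q', OF 1 assms(3,4,5) \<open>g q'\<close>]
    have "forbidden_within (V \<union> W) (\<lambda>p. f p \<and> g p)"
      by (rule forbidden_within_mono) blast
    then show ?thesis unfolding lro_or_forbidden_within_def ..
  next
    case 2
    from assms(5) have "W \<inter> V = {}" by blast
    from forbidden_within_conj[where q = q, OF 2 assms(4,3) this \<open>f q\<close>]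
    have "forbidden_within (V \<union> W) (\<lambda>p. g p \<and> f p)"
      by (rule forbidden_within_mono) blast
    then show ?thesis unfolding lro_or_forbidden_within_def by (simp add: conj_commute)
  next
    case 3
    then show ?thesis using assms(5) by (rule lro_within_conj)
  qed
qed

lemma read_once_formula_lro_or_forbidden_within:
  "distinct (var_occs \<phi>) \<Longrightarrow> lro_or_forbidden_within (set (var_occs \<phi>)) (eval \<phi>)"
proof (induction \<phi>)
  case (FConst b)
  then show ?case by (auto simp: lro_or_forbidden_within_def lro_within_def)
next
  case (FVar x)
  then show ?case
    using lro_within_nested[OF nested.lit_pos[of x]] by (simp add: lro_or_forbidden_within_def eval_as_fun)
next
  case (FNeg t)
  then show ?case using lro_or_forbidden_within_neg[of "set (var_occs t)" "eval t"] by (simp add: eval_as_fun)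
next
  case (FAnd s t)
  then show ?case
    using lro_or_forbidden_within_conj[OF _ _ depends_only_on_eval depends_only_on_eval] by (auto simp: eval_as_fun)
next
  case (FOr s t)
  have "lro_or_forbidden_within (set (var_occs s) \<union> set (var_occs t)) (\<lambda>p. \<not> eval s p \<and> \<not> eval t p)"
  proof (rule lro_or_forbidden_within_conj)
    show "depends_only_on (set (var_occs s)) (\<lambda>p. \<not> eval s p)"
      and "depends_only_on (set (var_occs t)) (\<lambda>p. \<not> eval t p)"
      using depends_only_on_eval[of s] depends_only_on_eval[of t] unfolding depends_only_on_def by blast+
  qed (use FOr lro_or_forbidden_within_neg in auto)
  from lro_or_forbidden_within_neg[OF this] show ?case by (simp add: eval_as_fun)
qed

theorem mainTheorem15:
  fixes f :: "('n::finite \<Rightarrow> bool) \<Rightarrow> bool"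
  assumes "read_once f"
  shows "(linear_read_once f \<longleftrightarrow> chow f) \<and> (chow f \<longleftrightarrow> \<not> forbidden_restriction f)"
proof -
  obtain \<phi> where "distinct (var_occs \<phi>)" and "f = eval \<phi>"
    using assms unfolding read_once_def by fastforce
  then have "lro_within (set (var_occs \<phi>)) f \<or> forbidden_within (set (var_occs \<phi>)) f"
    using read_once_formula_lro_or_forbidden_within unfolding lro_or_forbidden_within_def by blast
  then have "\<not> forbidden_restriction f \<longrightarrow> linear_read_once f"
    using lro_within_imp_linear_read_once forbidden_within_imp_forbidden_restriction by blast
  then show ?thesis
    using linear_read_once_imp_chow forbidden_restriction_imp_not_chow by blast
qed

end
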